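(* Let $G$ be a disconnected skew graph with table $T$. Then the non-empty boxes of $T$ form one of the following four patterns: (1) pattern $\boxplus$: there are exactly four non-empty boxes, located at $(i_1,j_1),(i_1,j_2),(i_2,j_1),(i_2,j_2)$ for some $i_1\ne i_2$ and $j_1\ne j_2$; (2) pattern $\mathcal{R}$: all non-empty boxes lie in a single row; (3) pattern $\mathcal{C}$: all non-empty boxes lie in a single column; (4) pattern $\mathcal{R}\cup\mathcal{C}$: all non-empty boxes lie in the union of one row $R$ and one column $C$, where $V(R)\not\subseteq V(C)$ and $V(C)\not\subseteq V(R)$.
   Context: A skew graph is defined from a table $T$ with $m$ rows and $n$ columns whose box $(i,j)$ contains a non-negative integer $t_{ij}$: place $t_{ij}$ distinct vertices in box $(i,j)$, and join two vertices by an edge if and only if their boxes lie in different rows and in different columns (vertices in the same row, same column, or same box are non-adjacent). Equivalently, skew graphs are exactly the complements of line graphs of bipartite multigraphs. A box is non-empty if it contains at least one vertex. For a row $R$ (resp. column $C$) of $T$, $V(R)$ (resp. $V(C)$) is the set of vertices located in boxes of that row (resp. column). *)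

theory Defs
  imports Main
begin

text \<open>A table with m rows and n columns is a function t :: nat => nat => nat,
  where t i j (for i < m, j < n) is the number of vertices in box (i,j).\<close>

definition skew_vertices :: "nat \<Rightarrow> nat \<Rightarrow> (nat \<Rightarrow> nat \<Rightarrow> nat) \<Rightarrow> (nat \<times> nat \<times> nat) set" where
  "skew_vertices m n t = {(i, j, k). i < m \<and> j < n \<and> k < t i j}"

definition skew_adj :: "nat \<Rightarrow> nat \<Rightarrow> (nat \<Rightarrow> nat \<Rightarrow> nat) \<Rightarrow> nat \<times> nat \<times> nat \<Rightarrow> nat \<times> nat \<times> nat \<Rightarrow> bool" where
  "skew_adj m n t u v \<longleftrightarrow> u \<in> skew_vertices m n t \<and> v \<in> skew_vertices m n t \<and>
     fst u \<noteq> fst v \<and> fst (snd u) \<noteq> fst (snd v)"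

definition skew_disconnected :: "nat \<Rightarrow> nat \<Rightarrow> (nat \<Rightarrow> nat \<Rightarrow> nat) \<Rightarrow> bool" where
  "skew_disconnected m n t \<longleftrightarrow>
     (\<exists>u \<in> skew_vertices m n t. \<exists>v \<in> skew_vertices m n t. \<not> (skew_adj m n t)\<^sup>*\<^sup>* u v)"

definition nonempty_boxes :: "nat \<Rightarrow> nat \<Rightarrow> (nat \<Rightarrow> nat \<Rightarrow> nat) \<Rightarrow> (nat \<times> nat) set" where
  "nonempty_boxes m n t = {(i, j). i < m \<and> j < n \<and> 0 < t i j}"

definition row_vertices :: "nat \<Rightarrow> nat \<Rightarrow> (nat \<Rightarrow> nat \<Rightarrow> nat) \<Rightarrow> nat \<Rightarrow> (nat \<times> nat \<times> nat) set" where
  "row_vertices m n t r = {v \<in> skew_vertices m n t. fst v = r}"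

definition col_vertices :: "nat \<Rightarrow> nat \<Rightarrow> (nat \<Rightarrow> nat \<Rightarrow> nat) \<Rightarrow> nat \<Rightarrow> (nat \<times> nat \<times> nat) set" where
  "col_vertices m n t c = {v \<in> skew_vertices m n t. fst (snd v) = c}"

end

theory Submission
  imports Defs
begin

text \<open>Two vertices are adjacent exactly when their boxes are not aligned, i.e. share neither a row
  nor a column. Let u and v be unconnected vertices and consider the boxes met by the component of u.
  If the box of v is among them, every non-empty box is aligned with the box of v, since otherwise
  one of its vertices would join v to that component; so all non-empty boxes lie in the row and
  column of v. Otherwise every box of the component is aligned with every other non-empty box, and
  a combinatorial analysis of such a bipartition shows that the non-empty boxes form a 2x2 grid or
  lie in one row and one column. In the latter case, V(R) \<subseteq> V(C) forces all boxes into the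
  column, and V(C) \<subseteq> V(R) forces them into the row.\<close>

definition aligned :: "'a \<times> 'b \<Rightarrow> 'a \<times> 'b \<Rightarrow> bool" where
  "aligned p q \<longleftrightarrow> fst p = fst q \<or> snd p = snd q"

lemma aligned_refl [simp]: "aligned p p"
  by (simp add: aligned_def)

lemma aligned_commute: "aligned p q \<longleftrightarrow> aligned q p"
  by (auto simp: aligned_def)

lemma aligned_with_both_iff:
  assumes "\<not> aligned p p'"
  shows "aligned q p \<and> aligned q p' \<longleftrightarrow> q = (fst p, snd p') \<or> q = (fst p', snd p)"
  using assms by (cases p; cases p'; cases q) (auto simp: aligned_def)

definition is_grid :: "('a \<times> 'b) set \<Rightarrow> bool" where
  "is_grid S \<longleftrightarrow>
     (\<exists>i1 i2 j1 j2. i1 \<noteq> i2 \<and> j1 \<noteq> j2 \<and> S = {(i1, j1), (i1, j2), (i2, j1), (i2, j2)})"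

definition is_cross :: "('a \<times> 'b) set \<Rightarrow> bool" where
  "is_cross S \<longleftrightarrow> (\<exists>r \<in> fst ` S. \<exists>c \<in> snd ` S. \<forall>p \<in> S. aligned p (r, c))"

lemma is_crossI:
  assumes "q \<in> S" and "\<forall>p \<in> S. aligned p q"
  shows "is_cross S"
  using assms unfolding is_cross_def by (metis image_eqI prod.collapse)

lemma grid_or_cross_if_unaligned_pair:
  assumes "p \<in> A" "p' \<in> A" "\<not> aligned p p'" "B \<noteq> {}"
    and "\<forall>a \<in> A. \<forall>b \<in> B. aligned a b"
  shows "is_grid (A \<union> B) \<or> is_cross (A \<union> B)"
proof -
  let ?q = "(fst p, snd p')" and ?q' = "(fst p', snd p)"
  have B_corners: "B \<subseteq> {?q, ?q'}"
    using assms(1,2,5) aligned_with_both_iff[OF assms(3)] aligned_commute by blast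
  show ?thesis
  proof (cases "B = {?q, ?q'}")
    case True
    have "\<not> aligned ?q ?q'"
      using assms(3) by (auto simp: aligned_def)
    then have "A \<subseteq> {p, p'}"
      using assms(5) True aligned_with_both_iff[of ?q ?q'] by auto
    with assms(1,2) True
    have "A \<union> B = {(fst p, snd p), (fst p, snd p'), (fst p', snd p), (fst p', snd p')}"
      by auto
    moreover have "fst p \<noteq> fst p'" "snd p \<noteq> snd p'"
      using assms(3) by (auto simp: aligned_def)
    ultimately show ?thesis
      unfolding is_grid_def by blast
  next
    case False
    with B_corners \<open>B \<noteq> {}\<close> obtain q where "B = {q}"
      by blast
    with assms(5) show ?thesis
      by (intro disjI2 is_crossI[of q]) auto
  qed
qed

lemma grid_or_cross_if_aligned_bipartition:
  assumes "A \<noteq> {}" "B \<noteq> {}" and aligned_AB: "\<forall>a \<in> A. \<forall>b \<in> B. aligned a b"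
  shows "is_grid (A \<union> B) \<or> is_cross (A \<union> B)"
proof (cases "\<exists>p \<in> A \<union> B. \<exists>p' \<in> A \<union> B. \<not> aligned p p'")
  case True
  then obtain p p' where pp': "p \<in> A \<union> B" "p' \<in> A \<union> B" "\<not> aligned p p'"
    by blast
  with aligned_AB aligned_commute consider "p \<in> A" "p' \<in> A" | "p \<in> B" "p' \<in> B"
    by blast
  then show ?thesis
  proof cases
    case 1
    with pp' assms show ?thesis
      by (intro grid_or_cross_if_unaligned_pair)
  next
    case 2
    have "\<forall>b \<in> B. \<forall>a \<in> A. aligned b a"
      using aligned_AB aligned_commute by blast
    with 2 pp' \<open>A \<noteq> {}\<close> show ?thesis
      using grid_or_cross_if_unaligned_pair[of p B p' A] by (simp add: Un_commute)
  qed
next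
  case False
  with \<open>A \<noteq> {}\<close> show ?thesis
    by (metis Un_iff ex_in_conv is_crossI)
qed

definition box :: "nat \<times> nat \<times> nat \<Rightarrow> nat \<times> nat" where
  "box v = (fst v, fst (snd v))"

lemma skew_adj_iff:
  "skew_adj m n t u v \<longleftrightarrow>
     u \<in> skew_vertices m n t \<and> v \<in> skew_vertices m n t \<and> \<not> aligned (box u) (box v)"
  by (auto simp: skew_adj_def aligned_def box_def)

lemma box_in_nonempty_boxes: "v \<in> skew_vertices m n t \<Longrightarrow> box v \<in> nonempty_boxes m n t"
  by (auto simp: skew_vertices_def nonempty_boxes_def box_def)

lemma nonempty_box_vertex: "(i, j) \<in> nonempty_boxes m n t \<Longrightarrow> (i, j, 0) \<in> skew_vertices m n t"
  by (auto simp: skew_vertices_def nonempty_boxes_def)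

lemma skew_adj_rtranclp_vertex:
  assumes "(skew_adj m n t)\<^sup>*\<^sup>* u v" "u \<in> skew_vertices m n t"
  shows "v \<in> skew_vertices m n t"
  using assms by (induction rule: rtranclp_induct) (auto simp: skew_adj_def)

lemma skew_adj_into_unaligned_box:
  assumes "v \<in> skew_vertices m n t" "(i, j) \<in> nonempty_boxes m n t" "\<not> aligned (box v) (i, j)"
  shows "skew_adj m n t v (i, j, 0)"
  using assms nonempty_box_vertex by (auto simp: skew_adj_iff box_def)

definition component_boxes ::
    "nat \<Rightarrow> nat \<Rightarrow> (nat \<Rightarrow> nat \<Rightarrow> nat) \<Rightarrow> nat \<times> nat \<times> nat \<Rightarrow> (nat \<times> nat) set" where
  "component_boxes m n t u = box ` {v. (skew_adj m n t)\<^sup>*\<^sup>* u v}"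

lemma component_boxes_subset:
  "u \<in> skew_vertices m n t \<Longrightarrow> component_boxes m n t u \<subseteq> nonempty_boxes m n t"
  unfolding component_boxes_def using box_in_nonempty_boxes skew_adj_rtranclp_vertex by blast

lemma component_boxes_aligned:
  assumes "u \<in> skew_vertices m n t" "p \<in> component_boxes m n t u"
    and "q \<in> nonempty_boxes m n t - component_boxes m n t u"
  shows "aligned p q"
proof (rule ccontr)
  assume unaligned: "\<not> aligned p q"
  obtain v where v: "(skew_adj m n t)\<^sup>*\<^sup>* u v" "p = box v"
    using assms(2) by (auto simp: component_boxes_def)
  obtain i j where q: "q = (i, j)"
    by fastforce
  have "skew_adj m n t v (i, j, 0)"
    using v unaligned q assms(1,3) skew_adj_rtranclp_vertex
    by (intro skew_adj_into_unaligned_box) auto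
  with v(1) have "(skew_adj m n t)\<^sup>*\<^sup>* u (i, j, 0)"
    by (rule rtranclp.rtrancl_into_rtrancl)
  then have "q \<in> component_boxes m n t u"
    unfolding component_boxes_def q by (metis box_def fst_conv snd_conv image_eqI mem_Collect_eq)
  with assms(3) show False
    by blast
qed

lemma same_box_unreachable_aligned:
  assumes "w \<in> skew_vertices m n t" "v \<in> skew_vertices m n t" "box w = box v"
    and "\<not> (skew_adj m n t)\<^sup>*\<^sup>* w v" "p \<in> nonempty_boxes m n t"
  shows "aligned p (box v)"
proof (rule ccontr)
  assume unaligned: "\<not> aligned p (box v)"
  obtain i j where p: "p = (i, j)"
    by fastforce
  have "skew_adj m n t w (i, j, 0)"
    using assms unaligned p aligned_commute by (metis skew_adj_into_unaligned_box)
  moreover have "skew_adj m n t (i, j, 0) v"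
    using assms unaligned p nonempty_box_vertex by (auto simp: skew_adj_iff box_def)
  ultimately show False
    using assms(4) by (meson converse_rtranclp_into_rtranclp r_into_rtranclp)
qed

lemma skew_disconnected_grid_or_cross:
  assumes "skew_disconnected m n t"
  shows "is_grid (nonempty_boxes m n t) \<or> is_cross (nonempty_boxes m n t)"
proof -
  let ?S = "nonempty_boxes m n t" and ?A = "component_boxes m n t"
  obtain u v where u: "u \<in> skew_vertices m n t" and v: "v \<in> skew_vertices m n t"
    and unreachable: "\<not> (skew_adj m n t)\<^sup>*\<^sup>* u v"
    using assms by (auto simp: skew_disconnected_def)
  show ?thesis
  proof (cases "box v \<in> ?A u")
    case True
    then obtain w where w: "(skew_adj m n t)\<^sup>*\<^sup>* u w" "box w = box v"
      by (auto simp: component_boxes_def)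
    with unreachable have "\<not> (skew_adj m n t)\<^sup>*\<^sup>* w v"
      by (meson rtranclp_trans)
    with w u v have "\<forall>p \<in> ?S. aligned p (box v)"
      by (metis same_box_unreachable_aligned skew_adj_rtranclp_vertex)
    then show ?thesis
      using v box_in_nonempty_boxes is_crossI by blast
  next
    case False
    have "box u \<in> ?A u"
      by (auto simp: component_boxes_def)
    moreover have "?S = ?A u \<union> (?S - ?A u)"
      using component_boxes_subset[OF u] by blast
    moreover have "box v \<in> ?S - ?A u"
      using False v box_in_nonempty_boxes by blast
    ultimately show ?thesis
      using component_boxes_aligned[OF u] grid_or_cross_if_aligned_bipartition[of "?A u" "?S - ?A u"]
      by (metis empty_iff)
  qed
qed

lemma box_in_row_subset_col:
  assumes "row_vertices m n t r \<subseteq> col_vertices m n t c" "(r, j) \<in> nonempty_boxes m n t"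
  shows "j = c"
  using assms nonempty_box_vertex[OF assms(2)] by (auto simp: row_vertices_def col_vertices_def)

lemma box_in_col_subset_row:
  assumes "col_vertices m n t c \<subseteq> row_vertices m n t r" "(i, c) \<in> nonempty_boxes m n t"
  shows "i = r"
  using assms nonempty_box_vertex[OF assms(2)] by (auto simp: row_vertices_def col_vertices_def)

lemma cross_patterns:
  assumes "r < m" "c < n" and cross: "\<forall>p \<in> nonempty_boxes m n t. aligned p (r, c)"
  shows "(\<exists>r < m. \<forall>(i, j) \<in> nonempty_boxes m n t. i = r)
       \<or> (\<exists>c < n. \<forall>(i, j) \<in> nonempty_boxes m n t. j = c)
       \<or> (\<exists>r < m. \<exists>c < n. (\<forall>(i, j) \<in> nonempty_boxes m n t. i = r \<or> j = c) \<and>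
            \<not> row_vertices m n t r \<subseteq> col_vertices m n t c \<and>
            \<not> col_vertices m n t c \<subseteq> row_vertices m n t r)"
proof -
  have on_cross: "\<forall>(i, j) \<in> nonempty_boxes m n t. i = r \<or> j = c"
    using cross by (auto simp: aligned_def)
  have "\<forall>(i, j) \<in> nonempty_boxes m n t. j = c"
    if "row_vertices m n t r \<subseteq> col_vertices m n t c"
    using on_cross box_in_row_subset_col[OF that] by fastforce
  moreover have "\<forall>(i, j) \<in> nonempty_boxes m n t. i = r"
    if "col_vertices m n t c \<subseteq> row_vertices m n t r"
    using on_cross box_in_col_subset_row[OF that] by fastforce
  ultimately show ?thesis
    using assms(1,2) on_cross by blast
qed

theorem theorem4:
  fixes m n :: nat and t :: "nat \<Rightarrow> nat \<Rightarrow> nat"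
  assumes "skew_disconnected m n t"
  shows "(\<exists>i1 i2 j1 j2. i1 < m \<and> i2 < m \<and> j1 < n \<and> j2 < n \<and> i1 \<noteq> i2 \<and> j1 \<noteq> j2 \<and>
            nonempty_boxes m n t = {(i1, j1), (i1, j2), (i2, j1), (i2, j2)})
       \<or> (\<exists>r < m. \<forall>(i, j) \<in> nonempty_boxes m n t. i = r)
       \<or> (\<exists>c < n. \<forall>(i, j) \<in> nonempty_boxes m n t. j = c)
       \<or> (\<exists>r < m. \<exists>c < n. (\<forall>(i, j) \<in> nonempty_boxes m n t. i = r \<or> j = c) \<and>
            \<not> row_vertices m n t r \<subseteq> col_vertices m n t c \<and>
            \<not> col_vertices m n t c \<subseteq> row_vertices m n t r)"
proof -
  have bounds: "fst p < m" "snd p < n" if "p \<in> nonempty_boxes m n t" for p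
    using that by (auto simp: nonempty_boxes_def)
  from skew_disconnected_grid_or_cross[OF assms] show ?thesis
  proof
    assume "is_grid (nonempty_boxes m n t)"
    then obtain i1 i2 j1 j2 where "i1 \<noteq> i2" "j1 \<noteq> j2"
      and grid: "nonempty_boxes m n t = {(i1, j1), (i1, j2), (i2, j1), (i2, j2)}"
      by (auto simp: is_grid_def)
    moreover have "i1 < m" "i2 < m" "j1 < n" "j2 < n"
      using bounds[of "(i1, j1)"] bounds[of "(i2, j2)"] grid by auto
    ultimately show ?thesis
      by (intro disjI1 exI[of _ i1] exI[of _ i2] exI[of _ j1] exI[of _ j2]) simp
  next
    assume "is_cross (nonempty_boxes m n t)"
    then obtain r c
      where r: "r \<in> fst ` nonempty_boxes m n t" and c: "c \<in> snd ` nonempty_boxes m n t"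
      and cross: "\<forall>p \<in> nonempty_boxes m n t. aligned p (r, c)"
      unfolding is_cross_def by blast
    from r c have "r < m" "c < n"
      using bounds by auto
    from cross_patterns[OF this cross] show ?thesis
      by (rule disjI2)
  qed
qed

end
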